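(* Let $d\ge 1$ and $n\ge 1$ be integers. Let $v_1,\ldots,v_n\in\mathbb{R}^d$ be non-zero vectors with $\|v_i\|_2\le 1$ for all $i$, let $\varepsilon_1,\ldots,\varepsilon_n$ be independent Rademacher random variables, and set $S_n=v_1\varepsilon_1+\cdots+v_n\varepsilon_n$. Let $R_n=\varepsilon_1+\cdots+\varepsilon_n$. Then for every non-zero $x\in\mathbb{R}^d$, $$\mathbb{P}(S_n=x)\le \mathbb{P}(R_n=k+\delta_{n,k})=\binom{n}{\lceil \frac{n+k}{2}\rceil}\Big/2^n,$$ where $k=\lceil \|x\|_2\rceil$ is the upper integer part of $\|x\|_2$.
   Context: A Rademacher random variable $\varepsilon$ satisfies $\mathbb{P}(\varepsilon=1)=\mathbb{P}(\varepsilon=-1)=\tfrac12$. For integers $n,k$, $\delta_{n,k}$ is defined to be $0$ if $n+k$ is even and $1$ otherwise. *)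

theory Defs
  imports "HOL-Probability.Probability"
begin

text \<open>Joint law of n independent Rademacher variables \<open>\<epsilon>_0,...,\<epsilon>_(n-1)\<close>:
  the uniform distribution on sign sequences in \<open>{-1,1}^n\<close>.\<close>
definition rademacher_seqs :: "nat \<Rightarrow> (nat \<Rightarrow> real) set" where
  "rademacher_seqs n = {..<n} \<rightarrow>\<^sub>E {-1, 1}"

definition rademacher_pmf :: "nat \<Rightarrow> (nat \<Rightarrow> real) pmf" where
  "rademacher_pmf n = pmf_of_set (rademacher_seqs n)"

definition delta_nk :: "nat \<Rightarrow> int \<Rightarrow> int" where
  "delta_nk n k = (if even (int n + k) then 0 else 1)"

end

(* Choose a direction w with norm w < 1 and <x, w> > k - 1 that is orthogonal to no v_i
   (finitely many hyperplanes cannot cover an open set).  If S_n = x then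
   sum_i eps_i a_i = t := <x, w> > k - 1 with a_i = <v_i, w> in [-1, 1] - {0}, and
   eps |-> A = {i. eps_i = sgn a_i} maps these sign vectors injectively to sets A with
   signed sum sum_{i in A} |a_i| - sum_{i notin A} |a_i| = t.

   Order the indices by |a_i| and take the Greene-Kleitman symmetric chain decomposition of
   the subsets, given by bracket matching.  The signed sum increases strictly along a chain,
   so each chain contains at most one of the sets A; and the signed sum of a set is at most
   its number of unmatched elements, which forces every chain containing one of them to pass
   through level ceil((n + k) / 2).  So there are at most (n choose ceil((n + k) / 2)) such
   sets, and this is exactly the number of sign vectors with R_n = k + delta_{n,k}. *)

theory Submission
  imports Defs
begin

(* Bracket matching, reading js from right to left: an element outside A opens a bracket,
   an element of A closes the most recently opened one if there is one.
   unmatched js A = (u, p): u elements stay unmatched, p of them in A.  chain_code js A marks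
   the elements of A that close a bracket; the subsets of set js with a given code form a
   chain, on which p takes every value 0, ..., u exactly once. *)
fun unmatched :: "'a list \<Rightarrow> 'a set \<Rightarrow> nat \<times> nat" where
  "unmatched [] A = (0, 0)"
| "unmatched (j # js) A = (case unmatched js A of (u, p) \<Rightarrow>
     if j \<in> A then (if p = u then (Suc u, Suc u) else (u - 1, p)) else (Suc u, p))"

fun chain_code :: "'a list \<Rightarrow> 'a set \<Rightarrow> bool list" where
  "chain_code [] A = []"
| "chain_code (j # js) A =
     (j \<in> A \<and> snd (unmatched js A) < fst (unmatched js A)) # chain_code js A"

lemma snd_unmatched_le: "snd (unmatched js A) \<le> fst (unmatched js A)"
  by (induction js) (auto split: prod.splits)

lemma unmatched_cong: "\<forall>i\<in>set js. i \<in> A \<longleftrightarrow> i \<in> B \<Longrightarrow> unmatched js A = unmatched js B"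
  by (induction js) (auto split: prod.splits)

lemma chain_code_cong: "\<forall>i\<in>set js. i \<in> A \<longleftrightarrow> i \<in> B \<Longrightarrow> chain_code js A = chain_code js B"
  by (induction js) (auto simp: unmatched_cong[of _ A B])

lemma card_unmatched:
  "distinct js \<Longrightarrow>
   2 * card (A \<inter> set js) + fst (unmatched js A) = length js + 2 * snd (unmatched js A)"
proof (induction js)
  case Nil
  then show ?case by simp
next
  case (Cons j js)
  obtain u p where up: "unmatched js A = (u, p)" by force
  have "p \<le> u" using snd_unmatched_le[of js A] up by simp
  moreover have "card (A \<inter> set (j # js))
                 = (if j \<in> A then Suc (card (A \<inter> set js)) else card (A \<inter> set js))"
    using Cons.prems by (auto simp: insert_absorb)
  ultimately show ?case
    using Cons up by (auto split: if_splits)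
qed

lemma chain_code_eqD:
  "chain_code js A = chain_code js B \<Longrightarrow>
   fst (unmatched js A) = fst (unmatched js B) \<and>
   (snd (unmatched js A) \<le> snd (unmatched js B) \<longrightarrow> A \<inter> set js \<subseteq> B \<inter> set js)"
proof (induction js)
  case Nil
  then show ?case by simp
next
  case (Cons j js)
  obtain u p where up: "unmatched js A = (u, p)" by force
  obtain u' p' where up': "unmatched js B = (u', p')" by force
  have "p \<le> u" "p' \<le> u'"
    using snd_unmatched_le[of js A] snd_unmatched_le[of js B] up up' by simp_all
  moreover have "(j \<in> A \<and> p < u) = (j \<in> B \<and> p' < u')" "chain_code js A = chain_code js B"
    using Cons.prems up up' by simp_all
  moreover note Cons.IH
  ultimately show ?case
    using up up' by (auto split: if_splits)
qed

lemma chain_member_exists: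
  assumes "distinct js" "q \<le> fst (unmatched js A)"
  shows "\<exists>B \<subseteq> set js. chain_code js B = chain_code js A \<and> snd (unmatched js B) = q"
  using assms
proof (induction js arbitrary: q)
  case Nil
  then show ?case by simp
next
  case (Cons j js)
  obtain u p where up: "unmatched js A = (u, p)" by force
  have "p \<le> u" using snd_unmatched_le[of js A] up by simp
  have "distinct js" "j \<notin> set js" using Cons.prems by auto
  have below: "\<exists>X \<subseteq> set js. chain_code js X = chain_code js A \<and> unmatched js X = (u, q')"
    if q': "q' \<le> u" for q'
  proof -
    obtain X where X: "X \<subseteq> set js" "chain_code js X = chain_code js A" "snd (unmatched js X) = q'"
      using Cons.IH[of q'] \<open>distinct js\<close> q' up by auto
    moreover have "fst (unmatched js X) = u" using chain_code_eqD[OF X(2)] up by simp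
    ultimately show ?thesis by (metis prod.collapse)
  qed
  have insert_j: "unmatched js (insert j X) = unmatched js X"
    "chain_code js (insert j X) = chain_code js X" for X
    using \<open>j \<notin> set js\<close> by (auto intro: unmatched_cong chain_code_cong)
  consider (matched) "j \<in> A" "p < u" "q < u" | (level) "\<not> (j \<in> A \<and> p < u)" "q \<le> u"
    | (top) "\<not> (j \<in> A \<and> p < u)" "q = Suc u"
    using Cons.prems(2) up \<open>p \<le> u\<close>
    by (cases "j \<in> A \<and> p < u") (auto simp: le_Suc_eq split: if_splits)
  then show ?case
  proof cases
    case matched
    then obtain X where "X \<subseteq> set js" "chain_code js X = chain_code js A" "unmatched js X = (u, q)"
      using below[of q] matched by auto
    then show ?thesis
      using matched up insert_j by (intro exI[of _ "insert j X"]) auto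
  next
    case level
    then obtain X where "X \<subseteq> set js" "chain_code js X = chain_code js A" "unmatched js X = (u, q)"
      using below by blast
    then show ?thesis
      using level up \<open>j \<notin> set js\<close> by (intro exI[of _ X]) auto
  next
    case top
    obtain X where "X \<subseteq> set js" "chain_code js X = chain_code js A" "unmatched js X = (u, u)"
      using below by blast
    then show ?thesis
      using top up insert_j by (intro exI[of _ "insert j X"]) (auto split: if_splits)
  qed
qed

definition signed_sum :: "('a \<Rightarrow> real) \<Rightarrow> 'a set \<Rightarrow> 'a set \<Rightarrow> real" where
  "signed_sum b I A = (\<Sum>i\<in>I. if i \<in> A then b i else - b i)"

lemma signed_sum_strict_mono:
  assumes "finite I" "\<forall>i\<in>I. 0 < b i" "A \<inter> I \<subset> B \<inter> I"
  shows "signed_sum b I A < signed_sum b I B"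
  unfolding signed_sum_def
proof (rule sum_strict_mono_ex1)
  show "\<forall>i\<in>I. (if i \<in> A then b i else - b i) \<le> (if i \<in> B then b i else - b i)"
    using assms by auto
  show "\<exists>i\<in>I. (if i \<in> A then b i else - b i) < (if i \<in> B then b i else - b i)"
    using assms by auto
qed fact

(* Since js is read from the largest weight down, a matched pair contributes
   b(closing) - b(opening) <= 0, an unmatched element of A at most 1 and an unmatched
   element outside A at most -c. *)
lemma signed_sum_le_unmatched:
  assumes "distinct js" "sorted_wrt (\<lambda>i j. b i \<le> b j) js" "\<forall>i\<in>set js. b i \<le> 1"
    "\<forall>i\<in>set js. c \<le> b i"
  shows "signed_sum b (set js) A
           + (real (fst (unmatched js A)) - real (snd (unmatched js A))) * c
         \<le> real (snd (unmatched js A))"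
  using assms
proof (induction js arbitrary: c)
  case Nil
  then show ?case by (simp add: signed_sum_def)
next
  case (Cons j js)
  obtain u p where up: "unmatched js A = (u, p)" by force
  have "p \<le> u" using snd_unmatched_le[of js A] up by simp
  have bj: "b j \<le> 1" "c \<le> b j" using Cons.prems by auto
  have IH: "signed_sum b (set js) A + (real u - real p) * b j \<le> real p"
    using Cons.IH[of "b j"] Cons.prems up by auto
  have sum_j: "signed_sum b (set (j # js)) A
               = (if j \<in> A then b j else - b j) + signed_sum b (set js) A"
    using Cons.prems by (simp add: signed_sum_def)
  consider (open_bracket) "j \<notin> A" | (unmatched_close) "j \<in> A" "p = u"
    | (matched_close) "j \<in> A" "p < u"
    using \<open>p \<le> u\<close> by fastforce
  then show ?case
  proof cases
    case open_bracket
    have "(real u + 1 - real p) * c \<le> (real u + 1 - real p) * b j"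
      using \<open>p \<le> u\<close> bj by (intro mult_left_mono) auto
    then show ?thesis using IH open_bracket up sum_j by (simp add: algebra_simps)
  next
    case unmatched_close
    then show ?thesis using IH up bj sum_j by simp
  next
    case matched_close
    have "(real u - 1 - real p) * c \<le> (real u - 1 - real p) * b j"
      using matched_close bj by (intro mult_left_mono) auto
    then show ?thesis using IH matched_close up sum_j by (simp add: algebra_simps)
  qed
qed

lemma two_mul_nat_ceiling_half:
  assumes "0 \<le> int n + k"
  shows "2 * int (nat \<lceil>(real n + of_int k) / 2\<rceil>) = int n + k + delta_nk n k"
proof -
  define m where "m = (int n + k + delta_nk n k) div 2"
  have m: "2 * m = int n + k + delta_nk n k"
    unfolding m_def delta_nk_def by presburger
  then have "\<lceil>(real n + of_int k) / 2\<rceil> = m"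
    by (intro ceiling_unique) (auto simp: delta_nk_def split: if_splits)
  moreover have "0 \<le> m"
    using m assms unfolding delta_nk_def by presburger
  ultimately show ?thesis
    using m by simp
qed

lemma same_chain_signed_sum_eq:
  assumes "distinct js" "\<forall>i\<in>set js. 0 < b i" "A \<subseteq> set js" "B \<subseteq> set js"
    and code: "chain_code js A = chain_code js B"
    and sum: "signed_sum b (set js) A = signed_sum b (set js) B"
  shows "A = B"
proof -
  have "A \<subseteq> B \<or> B \<subseteq> A"
    using chain_code_eqD[OF code] chain_code_eqD[OF code[symmetric]] assms(3,4)
    by (metis inf.absorb1 nat_le_linear)
  moreover have "\<not> A \<subset> B" "\<not> B \<subset> A"
    using signed_sum_strict_mono[of "set js" b] assms(2-4) sum
    by (metis inf.absorb1 order.irrefl finite_set)+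
  ultimately show ?thesis by blast
qed

lemma chain_meets_level:
  assumes "distinct js" "sorted_wrt (\<lambda>i j. b i \<le> b j) js" "\<forall>i\<in>set js. 0 \<le> b i \<and> b i \<le> 1"
    and "A \<subseteq> set js" "0 \<le> k" "of_int k - 1 < signed_sum b (set js) A"
  shows "\<exists>B \<subseteq> set js. card B = nat \<lceil>(real (length js) + of_int k) / 2\<rceil>
                      \<and> chain_code js B = chain_code js A"
proof -
  define n where "n = length js"
  define L where "L = nat \<lceil>(real n + of_int k) / 2\<rceil>"
  have L: "2 * int L = int n + k + delta_nk n k"
    using two_mul_nat_ceiling_half[of n k] \<open>0 \<le> k\<close> unfolding L_def by simp
  obtain u p where up: "unmatched js A = (u, p)" by force
  have "p \<le> u" using snd_unmatched_le[of js A] up by simp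
  have "signed_sum b (set js) A \<le> real p"
    using signed_sum_le_unmatched[of js b 0 A] assms(1-3) up by simp
  then have "k \<le> int p" using assms(6) by linarith
  have "2 * card A + u = n + 2 * p"
    using card_unmatched[OF assms(1), of A] assms(4) up unfolding n_def by (simp add: Int_absorb2)
  then have "even (int u + k + delta_nk n k)" "k + delta_nk n k \<le> int u"
    using \<open>k \<le> int p\<close> \<open>p \<le> u\<close> unfolding delta_nk_def by presburger+
  \<comment> \<open>The chain of A has members of every size (n - u) / 2 + q with q \<le> u.\<close>
  then obtain q where q: "2 * int q = int u + k + delta_nk n k" "q \<le> u"
    using \<open>0 \<le> k\<close>
    by (intro that[of "nat ((int u + k + delta_nk n k) div 2)"]) (auto simp: delta_nk_def)
  obtain B where B: "B \<subseteq> set js" "chain_code js B = chain_code js A" "snd (unmatched js B) = q"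
    using chain_member_exists[OF assms(1), of q A] q(2) up by auto
  have "fst (unmatched js B) = u" using chain_code_eqD[OF B(2)] up by simp
  then have "2 * card B + u = n + 2 * q"
    using card_unmatched[OF assms(1), of B] B unfolding n_def by (simp add: Int_absorb2)
  then have "card B = L" using L q(1) by linarith
  then show ?thesis using B unfolding L_def n_def by blast
qed

theorem card_equal_signed_sum_family_le:
  assumes "finite I" "\<forall>i\<in>I. 0 < b i \<and> b i \<le> 1" "F \<subseteq> Pow I"
    and "\<forall>A\<in>F. signed_sum b I A = t" "0 \<le> k" "of_int k - 1 < t"
  shows "card F \<le> card I choose nat \<lceil>(real (card I) + of_int k) / 2\<rceil>"
proof -
  obtain xs where "distinct xs" "set xs = I"
    using finite_distinct_list[OF assms(1)] by blast
  define js where "js = sort_key b xs"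
  have js: "distinct js" "set js = I" "length js = card I" "sorted_wrt (\<lambda>i j. b i \<le> b j) js"
    using \<open>distinct xs\<close> \<open>set xs = I\<close> sorted_sort_key[of b xs]
    by (auto simp: js_def distinct_card sorted_map)
  define L where "L = nat \<lceil>(real (card I) + of_int k) / 2\<rceil>"
  define level where "level = {B. B \<subseteq> I \<and> card B = L}"
  have "inj_on (chain_code js) F"
  proof (rule inj_onI)
    fix A B assume "A \<in> F" "B \<in> F" "chain_code js A = chain_code js B"
    then show "A = B"
      using same_chain_signed_sum_eq[OF js(1), of b A B] assms(2-4) js(2) by auto
  qed
  then have "card F = card (chain_code js ` F)"
    by (simp add: card_image)
  also have "\<dots> \<le> card (chain_code js ` level)"
  proof (rule card_mono)
    show "finite (chain_code js ` level)"
      using assms(1) by (simp add: level_def)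
    show "chain_code js ` F \<subseteq> chain_code js ` level"
    proof
      fix c assume "c \<in> chain_code js ` F"
      then obtain A where A: "A \<in> F" "c = chain_code js A" by blast
      have "\<forall>i\<in>set js. 0 \<le> b i \<and> b i \<le> 1" using assms(2) js(2) by auto
      then obtain B where "B \<subseteq> I" "card B = L" "chain_code js B = c"
        using chain_meets_level[OF js(1,4), of A k] A assms(3-6) js(2,3) unfolding L_def by auto
      then show "c \<in> chain_code js ` level" unfolding level_def by blast
    qed
  qed
  also have "\<dots> \<le> card level"
    using assms(1) by (simp add: level_def card_image_le)
  also have "\<dots> = card I choose L"
    using n_subsets[OF assms(1)] by (simp add: level_def)
  finally show ?thesis unfolding L_def .
qed

lemma finite_rademacher_seqs: "finite (rademacher_seqs n)"
  unfolding rademacher_seqs_def by (intro finite_PiE) auto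

lemma prob_rademacher_pmf:
  "measure_pmf.prob (rademacher_pmf n) E = card (rademacher_seqs n \<inter> E) / 2 ^ n"
proof -
  have "card (rademacher_seqs n) = 2 ^ n"
    unfolding rademacher_seqs_def by (simp add: card_PiE numeral_2_eq_2)
  moreover have "rademacher_seqs n \<noteq> {}"
    unfolding rademacher_seqs_def by (simp add: PiE_eq_empty_iff)
  ultimately show ?thesis
    unfolding rademacher_pmf_def by (simp add: measure_pmf_of_set finite_rademacher_seqs)
qed

lemma bij_betw_rademacher_seqs_Pow:
  assumes "\<And>i. i < n \<Longrightarrow> s i \<in> {-1, 1}"
  shows "bij_betw (\<lambda>\<epsilon>. {i. i < n \<and> \<epsilon> i = s i}) (rademacher_seqs n) (Pow {..<n})"
proof (rule bij_betwI)
  define g where "g A = (\<lambda>i. if i < n then if i \<in> A then s i else - s i else undefined)"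
    for A :: "nat set"
  show "(\<lambda>\<epsilon>. {i. i < n \<and> \<epsilon> i = s i}) \<in> rademacher_seqs n \<rightarrow> Pow {..<n}"
    by auto
  show "g \<in> Pow {..<n} \<rightarrow> rademacher_seqs n"
  proof
    fix A
    have "g A i \<in> {-1, 1}" if "i < n" for i
      using assms[OF that] that by (auto simp: g_def)
    then show "g A \<in> rademacher_seqs n"
      by (simp add: rademacher_seqs_def PiE_iff extensional_def g_def)
  qed
  show "g {i. i < n \<and> \<epsilon> i = s i} = \<epsilon>" if "\<epsilon> \<in> rademacher_seqs n" for \<epsilon>
    using that assms by (fastforce simp: g_def rademacher_seqs_def PiE_def extensional_def)
  show "{i. i < n \<and> g A i = s i} = A" if "A \<in> Pow {..<n}" for A
    using that assms by (force simp: g_def)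
qed

lemma rademacher_sum_eq_signed_sum:
  assumes "\<epsilon> \<in> rademacher_seqs n" "\<And>i. i < n \<Longrightarrow> s i \<in> {-1, 1}"
  shows "(\<Sum>i<n. \<epsilon> i * (s i * c i)) = signed_sum c {..<n} {i. i < n \<and> \<epsilon> i = s i}"
  unfolding signed_sum_def
proof (rule sum.cong)
  fix i assume "i \<in> {..<n}"
  then have "\<epsilon> i \<in> {-1, 1}" "s i \<in> {-1, 1}"
    using assms by (auto simp: rademacher_seqs_def)
  then show "\<epsilon> i * (s i * c i) = (if i \<in> {i. i < n \<and> \<epsilon> i = s i} then c i else - c i)"
    using \<open>i \<in> {..<n}\<close> by auto
qed simp

lemma card_rademacher_seqs_signed_sum:
  assumes "\<And>i. i < n \<Longrightarrow> s i \<in> {-1, 1}"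
  shows "card (rademacher_seqs n \<inter> {\<epsilon>. P (\<Sum>i<n. \<epsilon> i * (s i * c i))})
         = card {A. A \<subseteq> {..<n} \<and> P (signed_sum c {..<n} A)}"
proof -
  define f where "f \<epsilon> = {i. i < n \<and> \<epsilon> i = s i}" for \<epsilon> :: "nat \<Rightarrow> real"
  define Q where "Q A = P (signed_sum c {..<n} A)" for A
  have bij: "bij_betw f (rademacher_seqs n) (Pow {..<n})"
    unfolding f_def using bij_betw_rademacher_seqs_Pow[OF assms] .
  have "rademacher_seqs n \<inter> {\<epsilon>. P (\<Sum>i<n. \<epsilon> i * (s i * c i))}
        = rademacher_seqs n \<inter> {\<epsilon>. Q (f \<epsilon>)}"
    unfolding f_def Q_def by (auto simp: rademacher_sum_eq_signed_sum[OF _ assms])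
  moreover have "card (rademacher_seqs n \<inter> {\<epsilon>. Q (f \<epsilon>)})
                 = card (f ` (rademacher_seqs n \<inter> {\<epsilon>. Q (f \<epsilon>)}))"
    using bij unfolding bij_betw_def by (metis card_image inj_on_Int)
  moreover have "f ` (rademacher_seqs n \<inter> {\<epsilon>. Q (f \<epsilon>)}) = f ` rademacher_seqs n \<inter> {A. Q A}"
    by auto
  moreover have "f ` rademacher_seqs n = Pow {..<n}"
    using bij by (simp add: bij_betw_def)
  ultimately show ?thesis
    unfolding Q_def by (simp add: Pow_def Collect_conj_eq)
qed

lemma card_rademacher_sum_eq:
  "card (rademacher_seqs n \<inter> {\<epsilon>. (\<Sum>i<n. \<epsilon> i) = 2 * real m - real n}) = n choose m"
proof -
  have "signed_sum (\<lambda>_. 1) {..<n} A = 2 * real (card A) - real n" if "A \<subseteq> {..<n}" for A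
  proof -
    have "card ({..<n} - A) = n - card A"
      using that by (simp add: card_Diff_subset finite_subset)
    moreover have "card A \<le> n"
      using card_mono[OF finite_lessThan that] by simp
    ultimately show ?thesis
      using that by (simp add: signed_sum_def sum.If_cases Int_absorb1 Diff_eq[symmetric])
  qed
  then have "{A. A \<subseteq> {..<n} \<and> signed_sum (\<lambda>_. 1) {..<n} A = 2 * real m - real n}
             = {A. A \<subseteq> {..<n} \<and> card A = m}"
    by auto
  moreover have "card (rademacher_seqs n \<inter> {\<epsilon>. (\<Sum>i<n. \<epsilon> i) = 2 * real m - real n})
        = card {A. A \<subseteq> {..<n} \<and> signed_sum (\<lambda>_. 1) {..<n} A = 2 * real m - real n}"
    using card_rademacher_seqs_signed_sum[of n "\<lambda>_. 1" "\<lambda>r. r = 2 * real m - real n" "\<lambda>_. 1"]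
    by simp
  ultimately show ?thesis
    using n_subsets[of "{..<n}" m] by simp
qed

lemma card_rademacher_weighted_sum_le:
  fixes a :: "nat \<Rightarrow> real"
  assumes "\<And>i. i < n \<Longrightarrow> a i \<noteq> 0" "\<And>i. i < n \<Longrightarrow> \<bar>a i\<bar> \<le> 1"
    and "0 \<le> k" "of_int k - 1 < t"
  shows "card (rademacher_seqs n \<inter> {\<epsilon>. (\<Sum>i<n. \<epsilon> i * a i) = t})
         \<le> n choose nat \<lceil>(real n + of_int k) / 2\<rceil>"
proof -
  have "sgn (a i) \<in> {-1, 1}" if "i < n" for i
    using assms(1)[OF that] by (simp add: sgn_real_def)
  then have "card (rademacher_seqs n \<inter> {\<epsilon>. (\<Sum>i<n. \<epsilon> i * (sgn (a i) * \<bar>a i\<bar>)) = t})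
        = card {A. A \<subseteq> {..<n} \<and> signed_sum (\<lambda>i. \<bar>a i\<bar>) {..<n} A = t}"
    by (rule card_rademacher_seqs_signed_sum[where P = "\<lambda>r. r = t"])
  then have "card (rademacher_seqs n \<inter> {\<epsilon>. (\<Sum>i<n. \<epsilon> i * a i) = t})
        = card {A. A \<subseteq> {..<n} \<and> signed_sum (\<lambda>i. \<bar>a i\<bar>) {..<n} A = t}"
    by (simp add: sgn_mult_abs)
  also have "\<dots> \<le> card {..<n} choose nat \<lceil>(real (card {..<n::nat}) + of_int k) / 2\<rceil>"
    using assms by (intro card_equal_signed_sum_family_le[where b = "\<lambda>i. \<bar>a i\<bar>" and t = t]) auto
  finally show ?thesis by simp
qed

lemma exists_direction_avoiding_hyperplanes:
  fixes v :: "nat \<Rightarrow> 'a::euclidean_space" and x :: 'a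
  assumes "\<And>i. i < n \<Longrightarrow> v i \<noteq> 0" "c < norm x"
  shows "\<exists>w. norm w < 1 \<and> c < inner x w \<and> (\<forall>i<n. inner (v i) w \<noteq> 0)"
proof -
  define U where "U = ball 0 1 \<inter> {w. c < inner x w}"
  define r where "r = (1 + max 0 (c / norm x)) / 2"
  have "c < r * norm x"
    using assms(2) by (cases "x = 0") (auto simp: r_def field_simps max_def)
  moreover have "r < 1"
    using assms(2) by (cases "x = 0") (auto simp: r_def field_simps max_def)
  ultimately have "(r / norm x) *\<^sub>R x \<in> U"
    by (cases "x = 0")
      (auto simp: U_def r_def inner_commute power2_norm_eq_inner[symmetric] power2_eq_square)
  moreover have "open U"
    unfolding U_def by (intro open_Int open_ball open_halfspace_gt)
  moreover have "negligible (\<Union>i<n. {w. inner (v i) w = 0})"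
    using assms(1) by (intro negligible_Union finite_imageI) (auto simp: negligible_hyperplane)
  ultimately have "\<not> U \<subseteq> (\<Union>i<n. {w. inner (v i) w = 0})"
    using open_not_negligible negligible_subset by blast
  then show ?thesis
    unfolding U_def by auto
qed

lemma card_rademacher_sum_eq_delta:
  assumes "0 \<le> k"
  shows "card (rademacher_seqs n \<inter> {\<epsilon>. (\<Sum>i<n. \<epsilon> i) = of_int (k + delta_nk n k)})
         = n choose nat \<lceil>(real n + of_int k) / 2\<rceil>"
proof -
  have "2 * int (nat \<lceil>(real n + of_int k) / 2\<rceil>) = int n + k + delta_nk n k"
    using two_mul_nat_ceiling_half[of n k] assms by simp
  then have "of_int (k + delta_nk n k) = 2 * real (nat \<lceil>(real n + of_int k) / 2\<rceil>) - real n"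
    by linarith
  then show ?thesis
    by (simp add: card_rademacher_sum_eq)
qed

lemma card_rademacher_vector_sum_le:
  fixes v :: "nat \<Rightarrow> 'a::euclidean_space" and x :: 'a
  assumes "\<And>i. i < n \<Longrightarrow> v i \<noteq> 0" "\<And>i. i < n \<Longrightarrow> norm (v i) \<le> 1"
  shows "card (rademacher_seqs n \<inter> {\<epsilon>. (\<Sum>i<n. \<epsilon> i *\<^sub>R v i) = x})
         \<le> n choose nat \<lceil>(real n + of_int \<lceil>norm x\<rceil>) / 2\<rceil>"
proof -
  define k where "k = \<lceil>norm x\<rceil>"
  have "0 \<le> k"
    unfolding k_def zero_le_ceiling using norm_ge_zero[of x] by linarith
  have "of_int k - 1 < norm x"
    unfolding k_def using ceiling_correct[of "norm x"] by linarith
  then obtain w where w: "norm w < 1" "of_int k - 1 < inner x w" "\<forall>i<n. inner (v i) w \<noteq> 0"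
    using exists_direction_avoiding_hyperplanes[of n v] assms(1) by blast
  have "\<bar>inner (v i) w\<bar> \<le> 1" if "i < n" for i
  proof -
    have "\<bar>inner (v i) w\<bar> \<le> norm (v i) * norm w"
      by (rule Cauchy_Schwarz_ineq2)
    also have "\<dots> \<le> 1 * 1"
      using assms(2)[OF that] w(1) by (intro mult_mono) auto
    finally show ?thesis by simp
  qed
  then have "card (rademacher_seqs n \<inter> {\<epsilon>. (\<Sum>i<n. \<epsilon> i * inner (v i) w) = inner x w})
             \<le> n choose nat \<lceil>(real n + of_int k) / 2\<rceil>"
    using w \<open>0 \<le> k\<close> by (intro card_rademacher_weighted_sum_le) auto
  moreover have "rademacher_seqs n \<inter> {\<epsilon>. (\<Sum>i<n. \<epsilon> i *\<^sub>R v i) = x}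
                 \<subseteq> rademacher_seqs n \<inter> {\<epsilon>. (\<Sum>i<n. \<epsilon> i * inner (v i) w) = inner x w}"
    by (auto simp: inner_sum_left)
  ultimately show ?thesis
    unfolding k_def
    using card_mono[OF finite_Int[OF disjI1[OF finite_rademacher_seqs]]] order_trans by blast
qed

theorem theorem2:
  fixes n :: nat and v :: "nat \<Rightarrow> 'a::euclidean_space" and x :: 'a
  assumes "n \<ge> 1"
    and "\<And>i. i < n \<Longrightarrow> v i \<noteq> 0"
    and "\<And>i. i < n \<Longrightarrow> norm (v i) \<le> 1"
    and "x \<noteq> 0"
  shows "(measure_pmf.prob (rademacher_pmf n) {\<epsilon>. (\<Sum>i<n. \<epsilon> i *\<^sub>R v i) = x}
           \<le> measure_pmf.prob (rademacher_pmf n)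
               {\<epsilon>. (\<Sum>i<n. \<epsilon> i) = of_int (\<lceil>norm x\<rceil> + delta_nk n \<lceil>norm x\<rceil>)}
         \<and> measure_pmf.prob (rademacher_pmf n)
               {\<epsilon>. (\<Sum>i<n. \<epsilon> i) = of_int (\<lceil>norm x\<rceil> + delta_nk n \<lceil>norm x\<rceil>)}
           = real (n choose nat \<lceil>(real n + of_int \<lceil>norm x\<rceil>) / 2\<rceil>) / 2 ^ n)"
proof -
  have "0 \<le> \<lceil>norm x\<rceil>"
    unfolding zero_le_ceiling using norm_ge_zero[of x] by linarith
  then show ?thesis
    using card_rademacher_vector_sum_le[of n v x] card_rademacher_sum_eq_delta[of "\<lceil>norm x\<rceil>" n]
      assms(2,3)
    unfolding prob_rademacher_pmf by (simp add: divide_right_mono)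
qed

end
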